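(* Let $n_0,n_1$ be positive integers and $r>1$ an integer. A subset $\mathcal{Z}\subseteq\{1,2,\dots,r-1\}$ is admissible for $(n_0,n_1,r)$ if and only if there exists a pair of integer sequences $(y_\ell)_{\ell\ge0},(z_\ell)_{\ell\ge0}$ satisfying: (C1) $y_\ell\le n_0y_{\ell-1}+n_1z_{\ell-1}$ and $z_\ell\le n_1y_{\ell-1}+n_0z_{\ell-1}$ for every $\ell\ge1$; (C2) $y_{r-1}+z_{r-1}>0$; (C3) $y_\ell=z_\ell=0$ for $\ell\ge r$; (C4) $y_0=1$ and $z_0=0$; (C5) $\min\{y_\ell,z_\ell\}<0$ if and only if $\ell\in\mathcal{Z}$.
   Context: For integers $n,\ell>0$ and a finite-support integer sequence $\mu=(\mu_i)_{i\ge1}$, $\mathsf{K}_\ell(\mu,n)=n^\ell-\sum_{i=1}^{\ell}\mu_i n^{\ell-i}$ (with $0^0=1$). For a pair $(\eta,\omega)$ of nonnegative integer sequences $(\eta_\ell)_{\ell\ge1},(\omega_\ell)_{\ell\ge1}$ with finite support, let $\mathsf{K}^\pm_\ell=\mathsf{K}_\ell(\eta\pm\omega,n_0\pm n_1)$, let $\mathsf{r}(\eta,\omega)$ be the largest index in the union of their supports, and $\mathsf{K}^\pm=\mathsf{K}^\pm_{\mathsf{r}(\eta,\omega)}$. A subset $\mathcal{Z}\subseteq\{1,\dots,r-1\}$ is admissible for $(n_0,n_1,r)$ if there exists such a pair $(\eta,\omega)$ with $\mathsf{r}(\eta,\omega)=r$ and $\mathsf{K}^+=\mathsf{K}^-=0$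 such that, for $\ell\in\{1,\dots,r-1\}$, the inequality $\mathsf{K}^+_\ell\ge|\mathsf{K}^-_\ell|$ fails exactly when $\ell\in\mathcal{Z}$. *)

theory Defs
  imports Main
begin

definition Kfun :: "nat \<Rightarrow> (nat \<Rightarrow> int) \<Rightarrow> int \<Rightarrow> int" where
  "Kfun l mu n = n ^ l - (\<Sum>i=1..l. mu i * n ^ (l - i))"

text \<open>Sequences indexed by l >= 1 are modelled as nat => int; the value at 0 is ignored.\<close>
definition supp1 :: "(nat \<Rightarrow> int) \<Rightarrow> nat set" where
  "supp1 f = {l. 1 \<le> l \<and> f l \<noteq> 0}"

definition valid_pair :: "(nat \<Rightarrow> int) \<Rightarrow> (nat \<Rightarrow> int) \<Rightarrow> bool" where
  "valid_pair eta omega \<longleftrightarrow>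
     (\<forall>l\<ge>1. eta l \<ge> 0 \<and> omega l \<ge> 0) \<and> finite (supp1 eta) \<and> finite (supp1 omega)"

definition rank_is :: "(nat \<Rightarrow> int) \<Rightarrow> (nat \<Rightarrow> int) \<Rightarrow> nat \<Rightarrow> bool" where
  "rank_is eta omega r \<longleftrightarrow>
     r \<in> supp1 eta \<union> supp1 omega \<and> (\<forall>l \<in> supp1 eta \<union> supp1 omega. l \<le> r)"

definition Kplus :: "(nat \<Rightarrow> int) \<Rightarrow> (nat \<Rightarrow> int) \<Rightarrow> int \<Rightarrow> int \<Rightarrow> nat \<Rightarrow> int" where
  "Kplus eta omega n0 n1 l = Kfun l (\<lambda>i. eta i + omega i) (n0 + n1)"

definition Kminus :: "(nat \<Rightarrow> int) \<Rightarrow> (nat \<Rightarrow> int) \<Rightarrow> int \<Rightarrow> int \<Rightarrow> nat \<Rightarrow> int" where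
  "Kminus eta omega n0 n1 l = Kfun l (\<lambda>i. eta i - omega i) (n0 - n1)"

definition admissible :: "int \<Rightarrow> int \<Rightarrow> nat \<Rightarrow> nat set \<Rightarrow> bool" where
  "admissible n0 n1 r Z \<longleftrightarrow> Z \<subseteq> {1..r-1} \<and>
     (\<exists>eta omega. valid_pair eta omega \<and> rank_is eta omega r \<and>
        Kplus eta omega n0 n1 r = 0 \<and> Kminus eta omega n0 n1 r = 0 \<and>
        (\<forall>l\<in>{1..r-1}. (\<not> (Kplus eta omega n0 n1 l \<ge> \<bar>Kminus eta omega n0 n1 l\<bar>)) \<longleftrightarrow> l \<in> Z))"

end

theory Submission
  imports Defs
begin

text \<open>
  \<open>K\<^sub>l(\<mu>, n)\<close> obeys \<open>K\<^sub>l = n K\<^sub>l\<^sub>-\<^sub>1 - \<mu>\<^sub>l\<close>. Hence writing \<open>K\<^sup>+\<^sub>l = y\<^sub>l + z\<^sub>l\<close> and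
  \<open>K\<^sup>-\<^sub>l = y\<^sub>l - z\<^sub>l\<close> turns a pair \<open>(\<eta>, \<omega>)\<close> into the trajectory of a linear system
  driven by it, \<open>y\<^sub>l = n\<^sub>0 y\<^sub>l\<^sub>-\<^sub>1 + n\<^sub>1 z\<^sub>l\<^sub>-\<^sub>1 - \<eta>\<^sub>l\<close>, \<open>z\<^sub>l = n\<^sub>1 y\<^sub>l\<^sub>-\<^sub>1 + n\<^sub>0 z\<^sub>l\<^sub>-\<^sub>1 - \<omega>\<^sub>l\<close>,
  \<open>y\<^sub>0 = 1\<close>, \<open>z\<^sub>0 = 0\<close>, and every \<open>(y, z)\<close> with these initial values arises from exactly
  one pair. Under this correspondence nonnegativity of \<open>\<eta>, \<omega>\<close> is (C1),
  \<open>K\<^sup>+\<^sub>l \<ge> |K\<^sup>-\<^sub>l|\<close> is \<open>min y\<^sub>l z\<^sub>l \<ge> 0\<close>, and \<open>K\<^sup>\<plusminus>\<^sub>r = 0\<close> together with the vanishing of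
  \<open>\<eta>, \<omega>\<close> beyond \<open>r\<close> is (C3), since a system with zero input stays at zero. Given (C3),
  \<open>\<eta>\<^sub>r + \<omega>\<^sub>r = (n\<^sub>0 + n\<^sub>1)(y\<^sub>r\<^sub>-\<^sub>1 + z\<^sub>r\<^sub>-\<^sub>1)\<close>, so rank exactly \<open>r\<close> is (C2).
\<close>

lemma Kfun_0 [simp]: "Kfun 0 mu n = 1"
  by (simp add: Kfun_def)

lemma Kfun_Suc: "Kfun (Suc l) mu n = n * Kfun l mu n - mu (Suc l)"
proof -
  have "(\<Sum>i=1..l. mu i * n ^ (Suc l - i)) = n * (\<Sum>i=1..l. mu i * n ^ (l - i))"
    unfolding sum_distrib_left by (rule sum.cong) (auto simp: Suc_diff_le algebra_simps)
  then show ?thesis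
    by (simp add: Kfun_def algebra_simps)
qed

lemma Kfun_eqI:
  assumes "x 0 = 1" and "\<And>l. mu (Suc l) = n * x l - x (Suc l)"
  shows "Kfun l mu n = x l"
  by (induction l) (simp_all add: Kfun_Suc assms)

definition trajectory ::
    "int \<Rightarrow> int \<Rightarrow> (nat \<Rightarrow> int) \<Rightarrow> (nat \<Rightarrow> int) \<Rightarrow> (nat \<Rightarrow> int) \<Rightarrow> (nat \<Rightarrow> int) \<Rightarrow> bool" where
  "trajectory n0 n1 eta omega y z \<longleftrightarrow> y 0 = 1 \<and> z 0 = 0 \<and>
     (\<forall>l. y (Suc l) = n0 * y l + n1 * z l - eta (Suc l) \<and>
          z (Suc l) = n1 * y l + n0 * z l - omega (Suc l))"

lemma trajectoryD:
  assumes "trajectory n0 n1 eta omega y z"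
  shows "y 0 = 1" "z 0 = 0"
    and "y (Suc l) = n0 * y l + n1 * z l - eta (Suc l)"
    and "z (Suc l) = n1 * y l + n0 * z l - omega (Suc l)"
  using assms by (simp_all add: trajectory_def)

lemma trajectory_Kplus:
  assumes "trajectory n0 n1 eta omega y z"
  shows "Kplus eta omega n0 n1 l = y l + z l"
  unfolding Kplus_def
  by (rule Kfun_eqI) (simp_all add: trajectoryD[OF assms] algebra_simps)

lemma trajectory_Kminus:
  assumes "trajectory n0 n1 eta omega y z"
  shows "Kminus eta omega n0 n1 l = y l - z l"
  unfolding Kminus_def
  by (rule Kfun_eqI) (simp_all add: trajectoryD[OF assms] algebra_simps)

fun trajectory_of :: "int \<Rightarrow> int \<Rightarrow> (nat \<Rightarrow> int) \<Rightarrow> (nat \<Rightarrow> int) \<Rightarrow> nat \<Rightarrow> int \<times> int" where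
  "trajectory_of n0 n1 eta omega 0 = (1, 0)"
| "trajectory_of n0 n1 eta omega (Suc l) = (case trajectory_of n0 n1 eta omega l of (a, b) \<Rightarrow>
      (n0 * a + n1 * b - eta (Suc l), n1 * a + n0 * b - omega (Suc l)))"

lemma ex_trajectory: "\<exists>y z. trajectory n0 n1 eta omega y z"
proof -
  let ?t = "trajectory_of n0 n1 eta omega"
  have "trajectory n0 n1 eta omega (fst \<circ> ?t) (snd \<circ> ?t)"
    by (simp add: trajectory_def split: prod.split)
  then show ?thesis by blast
qed

lemma ex_trajectory_iff: "(\<exists>eta omega. trajectory n0 n1 eta omega y z) \<longleftrightarrow> y 0 = 1 \<and> z 0 = 0"
proof
  assume "y 0 = 1 \<and> z 0 = 0"
  then have "trajectory n0 n1 (\<lambda>l. n0 * y (l - 1) + n1 * z (l - 1) - y l)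
      (\<lambda>l. n1 * y (l - 1) + n0 * z (l - 1) - z l) y z"
    by (simp add: trajectory_def)
  then show "\<exists>eta omega. trajectory n0 n1 eta omega y z" by blast
qed (auto simp: trajectory_def)

lemma trajectory_nonneg_iff:
  assumes "trajectory n0 n1 eta omega y z"
  shows "(\<forall>l\<ge>1. eta l \<ge> 0 \<and> omega l \<ge> 0) \<longleftrightarrow>
    (\<forall>l\<ge>1. y l \<le> n0 * y (l - 1) + n1 * z (l - 1) \<and> z l \<le> n1 * y (l - 1) + n0 * z (l - 1))"
proof -
  have "eta l \<ge> 0 \<and> omega l \<ge> 0 \<longleftrightarrow>
      y l \<le> n0 * y (l - 1) + n1 * z (l - 1) \<and> z l \<le> n1 * y (l - 1) + n0 * z (l - 1)"
    if "l \<ge> 1" for l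
    using that trajectoryD(3,4)[OF assms, of "l - 1"] by simp
  then show ?thesis by blast
qed

lemma trajectory_zero_from:
  assumes "trajectory n0 n1 eta omega y z" and "y r = 0" "z r = 0"
    and "\<forall>l>r. eta l = 0 \<and> omega l = 0" and "r \<le> l"
  shows "y l = 0 \<and> z l = 0"
  using \<open>r \<le> l\<close>
proof (induction rule: dec_induct)
  case (step l)
  then show ?case using trajectoryD(3,4)[OF assms(1), of l] assms(4) by simp
qed (use assms in simp)

lemma trajectory_vanish_iff:
  assumes "trajectory n0 n1 eta omega y z"
  shows "(Kplus eta omega n0 n1 r = 0 \<and> Kminus eta omega n0 n1 r = 0 \<and>
      (\<forall>l>r. eta l = 0 \<and> omega l = 0)) \<longleftrightarrow> (\<forall>l\<ge>r. y l = 0 \<and> z l = 0)"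
proof
  assume K: "Kplus eta omega n0 n1 r = 0 \<and> Kminus eta omega n0 n1 r = 0 \<and>
      (\<forall>l>r. eta l = 0 \<and> omega l = 0)"
  then have "y r = 0" "z r = 0"
    using trajectory_Kplus[OF assms, of r] trajectory_Kminus[OF assms, of r] by simp_all
  with K show "\<forall>l\<ge>r. y l = 0 \<and> z l = 0"
    using trajectory_zero_from[OF assms] by blast
next
  assume zero: "\<forall>l\<ge>r. y l = 0 \<and> z l = 0"
  have "eta l = 0 \<and> omega l = 0" if "l > r" for l
  proof -
    obtain k where "l = Suc k" "k \<ge> r" using \<open>l > r\<close> by (cases l) auto
    then show ?thesis using trajectoryD(3,4)[OF assms, of k] zero by simp
  qed
  then show "Kplus eta omega n0 n1 r = 0 \<and> Kminus eta omega n0 n1 r = 0 \<and>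
      (\<forall>l>r. eta l = 0 \<and> omega l = 0)"
    using zero trajectory_Kplus[OF assms, of r] trajectory_Kminus[OF assms, of r] by simp
qed

lemma valid_pair_rank_iff:
  "valid_pair eta omega \<and> rank_is eta omega r \<longleftrightarrow>
    r \<ge> 1 \<and> (\<forall>l\<ge>1. eta l \<ge> 0 \<and> omega l \<ge> 0) \<and>
    (\<forall>l>r. eta l = 0 \<and> omega l = 0) \<and> eta r + omega r > 0"
    (is "?lhs \<longleftrightarrow> ?rhs")
proof
  assume ?lhs
  then have nonneg: "\<forall>l\<ge>1. eta l \<ge> 0 \<and> omega l \<ge> 0"
    and top: "r \<in> supp1 eta \<union> supp1 omega" and below: "\<forall>l \<in> supp1 eta \<union> supp1 omega. l \<le> r"
    by (simp_all add: valid_pair_def rank_is_def)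
  from top have "r \<ge> 1" and "eta r \<noteq> 0 \<or> omega r \<noteq> 0"
    by (auto simp: supp1_def)
  moreover have "eta l = 0 \<and> omega l = 0" if "l > r" for l
  proof -
    have "l \<notin> supp1 eta \<union> supp1 omega" using below that leD by blast
    then show ?thesis using that \<open>r \<ge> 1\<close> by (simp add: supp1_def)
  qed
  ultimately show ?rhs
    using nonneg by fastforce
next
  assume ?rhs
  then have "supp1 eta \<subseteq> {1..r}" "supp1 omega \<subseteq> {1..r}" "r \<in> supp1 eta \<union> supp1 omega"
    by (auto simp: supp1_def not_le[symmetric])
  with \<open>?rhs\<close> show ?lhs
    unfolding valid_pair_def rank_is_def by (auto intro: finite_subset)
qed

lemma min_neg_iff_not_abs_le: "min (a::int) b < 0 \<longleftrightarrow> \<not> \<bar>a - b\<bar> \<le> a + b"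
  by (auto simp: abs_if min_def)

lemma trajectory_sign_pattern_iff:
  assumes traj: "trajectory n0 n1 eta omega y z"
    and zero: "\<forall>l\<ge>r. y l = 0 \<and> z l = 0" and Z: "Z \<subseteq> {1..r-1}"
  shows "(\<forall>l\<in>{1..r-1}. \<not> \<bar>Kminus eta omega n0 n1 l\<bar> \<le> Kplus eta omega n0 n1 l \<longleftrightarrow> l \<in> Z) \<longleftrightarrow>
    (\<forall>l. min (y l) (z l) < 0 \<longleftrightarrow> l \<in> Z)"
proof -
  have "\<not> min (y l) (z l) < 0" and "l \<notin> Z" if "l \<notin> {1..r-1}" for l
  proof -
    from that consider "l = 0" | "l \<ge> r" by fastforce
    then show "\<not> min (y l) (z l) < 0" using zero trajectoryD(1,2)[OF traj] by cases auto
    show "l \<notin> Z" using that Z by blast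
  qed
  then show ?thesis
    using min_neg_iff_not_abs_le trajectory_Kplus[OF traj] trajectory_Kminus[OF traj] by metis
qed

definition admissible_pair ::
    "int \<Rightarrow> int \<Rightarrow> nat \<Rightarrow> nat set \<Rightarrow> (nat \<Rightarrow> int) \<Rightarrow> (nat \<Rightarrow> int) \<Rightarrow> bool" where
  "admissible_pair n0 n1 r Z eta omega \<longleftrightarrow>
     valid_pair eta omega \<and> rank_is eta omega r \<and>
     Kplus eta omega n0 n1 r = 0 \<and> Kminus eta omega n0 n1 r = 0 \<and>
     (\<forall>l\<in>{1..r-1}. \<not> \<bar>Kminus eta omega n0 n1 l\<bar> \<le> Kplus eta omega n0 n1 l \<longleftrightarrow> l \<in> Z)"

definition admissible_sequences ::
    "int \<Rightarrow> int \<Rightarrow> nat \<Rightarrow> nat set \<Rightarrow> (nat \<Rightarrow> int) \<Rightarrow> (nat \<Rightarrow> int) \<Rightarrow> bool" where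
  "admissible_sequences n0 n1 r Z y z \<longleftrightarrow>
     (\<forall>l\<ge>1. y l \<le> n0 * y (l - 1) + n1 * z (l - 1) \<and> z l \<le> n1 * y (l - 1) + n0 * z (l - 1)) \<and>
     y (r - 1) + z (r - 1) > 0 \<and>
     (\<forall>l\<ge>r. y l = 0 \<and> z l = 0) \<and>
     (\<forall>l. min (y l) (z l) < 0 \<longleftrightarrow> l \<in> Z)"

lemma trajectory_admissible_iff:
  assumes traj: "trajectory n0 n1 eta omega y z"
    and "n0 + n1 > 0" and "r \<ge> 1" and Z: "Z \<subseteq> {1..r-1}"
  shows "admissible_pair n0 n1 r Z eta omega \<longleftrightarrow> admissible_sequences n0 n1 r Z y z"
proof -
  have top: "eta r + omega r > 0 \<longleftrightarrow> y (r - 1) + z (r - 1) > 0" if "y r = 0" "z r = 0"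
  proof -
    have "eta r + omega r = (n0 + n1) * (y (r - 1) + z (r - 1))"
      using trajectoryD(3,4)[OF traj, of "r - 1"] that \<open>r \<ge> 1\<close> by (simp add: algebra_simps)
    then show ?thesis using \<open>n0 + n1 > 0\<close> by (simp add: zero_less_mult_iff)
  qed
  show ?thesis
    unfolding admissible_pair_def admissible_sequences_def
    using valid_pair_rank_iff[of eta omega r] trajectory_nonneg_iff[OF traj]
      trajectory_vanish_iff[OF traj, of r] trajectory_sign_pattern_iff[OF traj _ Z] top \<open>r \<ge> 1\<close>
    by blast
qed

theorem lemma4:
  fixes n0 n1 :: int and r :: nat and Z :: "nat set"
  assumes "n0 > 0" and "n1 > 0" and "r > 1" and "Z \<subseteq> {1..r-1}"
  shows "admissible n0 n1 r Z \<longleftrightarrow>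
    (\<exists>y z :: nat \<Rightarrow> int.
       (\<forall>l\<ge>1. y l \<le> n0 * y (l - 1) + n1 * z (l - 1) \<and> z l \<le> n1 * y (l - 1) + n0 * z (l - 1)) \<and>
       y (r - 1) + z (r - 1) > 0 \<and>
       (\<forall>l\<ge>r. y l = 0 \<and> z l = 0) \<and>
       y 0 = 1 \<and> z 0 = 0 \<and>
       (\<forall>l. min (y l) (z l) < 0 \<longleftrightarrow> l \<in> Z))"
proof -
  have "n0 + n1 > 0" "r \<ge> 1" using assms by simp_all
  note correspondence = trajectory_admissible_iff[OF _ this \<open>Z \<subseteq> {1..r-1}\<close>]
  have "admissible n0 n1 r Z \<longleftrightarrow> (\<exists>eta omega. admissible_pair n0 n1 r Z eta omega)"
    using \<open>Z \<subseteq> {1..r-1}\<close> by (simp add: admissible_def admissible_pair_def)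
  also have "\<dots> \<longleftrightarrow>
      (\<exists>eta omega y z. trajectory n0 n1 eta omega y z \<and> admissible_sequences n0 n1 r Z y z)"
    using correspondence ex_trajectory by meson
  also have "\<dots> \<longleftrightarrow> (\<exists>y z. y 0 = 1 \<and> z 0 = 0 \<and> admissible_sequences n0 n1 r Z y z)"
    using ex_trajectory_iff by blast
  finally show ?thesis
    by (auto simp: admissible_sequences_def)
qed

end
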